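(* For all constants $a_1,b_1,a_2,b_2>0$, with $C_1,C_2$ as defined in the context, $\sup_{\omega\ge0}|C_1(j\omega)C_2(j\omega)|\le 1$.
   Context: For constants $a_1,b_1,a_2,b_2>0$ and complex $s$, set $p_1(s)=a_1+b_1 s$, $p_2(s)=a_2+b_2 s$, $q=p_1+p_2$, and $m(s)=(s^2+q)\sqrt{1-\frac{4p_1p_2}{(s^2+q)^2}}$ with $\sqrt{\cdot}$ the principal complex square root (nonnegative real part), so $m^2=(s^2+q)^2-4p_1p_2$. Define $C_1=\frac{(s^2+q)-m}{2p_2}$ and $C_2=\frac{(s^2+q)-m}{2p_1}$. $j$ denotes the imaginary unit. *)

theory Defs
  imports Complex_Main "HOL-Library.Extended_Real"
begin

definition p1 :: "real \<Rightarrow> real \<Rightarrow> complex \<Rightarrow> complex" where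
  "p1 a1 b1 s = of_real a1 + of_real b1 * s"

definition p2 :: "real \<Rightarrow> real \<Rightarrow> complex \<Rightarrow> complex" where
  "p2 a2 b2 s = of_real a2 + of_real b2 * s"

definition qq :: "real \<Rightarrow> real \<Rightarrow> real \<Rightarrow> real \<Rightarrow> complex \<Rightarrow> complex" where
  "qq a1 b1 a2 b2 s = p1 a1 b1 s + p2 a2 b2 s"

definition mm :: "real \<Rightarrow> real \<Rightarrow> real \<Rightarrow> real \<Rightarrow> complex \<Rightarrow> complex" where
  "mm a1 b1 a2 b2 s =
     (s^2 + qq a1 b1 a2 b2 s) *
     csqrt (1 - 4 * p1 a1 b1 s * p2 a2 b2 s / (s^2 + qq a1 b1 a2 b2 s)^2)"

definition C1 :: "real \<Rightarrow> real \<Rightarrow> real \<Rightarrow> real \<Rightarrow> complex \<Rightarrow> complex" where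
  "C1 a1 b1 a2 b2 s = ((s^2 + qq a1 b1 a2 b2 s) - mm a1 b1 a2 b2 s) / (2 * p2 a2 b2 s)"

definition C2 :: "real \<Rightarrow> real \<Rightarrow> real \<Rightarrow> real \<Rightarrow> complex \<Rightarrow> complex" where
  "C2 a1 b1 a2 b2 s = ((s^2 + qq a1 b1 a2 b2 s) - mm a1 b1 a2 b2 s) / (2 * p1 a1 b1 s)"

end

theory Submission
  imports Defs
begin

text \<open>The numbers \<open>(A \<pm> A w)/2\<close> with \<open>w\<^sup>2 = 1 - 4P/A\<^sup>2\<close> are the two roots of
  \<open>z\<^sup>2 - A z + P\<close>, so their product is \<open>P\<close>. Since \<open>Re w \<ge> 0\<close>, the root \<open>(A - A w)/2\<close> is the one
  of smaller modulus, hence its squared modulus is at most \<open>\<bar>P\<bar>\<close>. With \<open>A = s\<^sup>2 + q\<close> and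
  \<open>P = p\<^sub>1 p\<^sub>2\<close> this root is \<open>p\<^sub>2 C\<^sub>1 = p\<^sub>1 C\<^sub>2\<close>, so \<open>\<bar>C\<^sub>1 C\<^sub>2\<bar> \<le> 1\<close> at every point \<open>s\<close>.\<close>

lemma norm_one_minus_le_norm_one_plus:
  fixes w :: complex
  assumes "Re w \<ge> 0"
  shows "cmod (1 - w) \<le> cmod (1 + w)"
proof (rule power2_le_imp_le)
  have "cmod (1 - w)^2 = (1 - Re w)^2 + (Im w)^2" by (simp add: cmod_power2)
  also have "\<dots> \<le> (1 + Re w)^2 + (Im w)^2" using assms by (simp add: power2_eq_square algebra_simps)
  also have "\<dots> = cmod (1 + w)^2" by (simp add: cmod_power2)
  finally show "cmod (1 - w)^2 \<le> cmod (1 + w)^2" .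
qed simp

lemma norm_diff_csqrt_power2_le:
  fixes A P :: complex
  shows "cmod (A - A * csqrt (1 - 4 * P / A^2))^2 \<le> cmod (4 * P)"
proof (cases "A = 0")
  case False
  define w where "w = csqrt (1 - 4 * P / A^2)"
  have roots_product: "(A - A * w) * (A + A * w) = 4 * P"
  proof -
    have "(A - A * w) * (A + A * w) = A^2 * (1 - w^2)" by (simp add: algebra_simps power2_eq_square)
    also have "\<dots> = 4 * P" using False by (simp add: w_def)
    finally show ?thesis .
  qed
  have "cmod (A - A * w) \<le> cmod (A + A * w)"
  proof -
    have "cmod (A - A * w) = cmod A * cmod (1 - w)" by (metis norm_mult right_diff_distrib mult_1_right)
    also have "\<dots> \<le> cmod A * cmod (1 + w)"
      using Re_csqrt norm_one_minus_le_norm_one_plus mult_left_mono norm_ge_zero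
      unfolding w_def by metis
    also have "\<dots> = cmod (A + A * w)" by (metis norm_mult distrib_left mult_1_right)
    finally show ?thesis .
  qed
  then have "cmod (A - A * w)^2 \<le> cmod (A - A * w) * cmod (A + A * w)"
    by (simp add: power2_eq_square mult_left_mono)
  also have "\<dots> = cmod (4 * P)" by (simp only: norm_mult[symmetric] roots_product)
  finally show ?thesis unfolding w_def .
qed simp

lemma norm_diff_csqrt_power2_div_le_1:
  fixes A P :: complex
  shows "cmod ((A - A * csqrt (1 - 4 * P / A^2))^2 / (4 * P)) \<le> 1"
  using norm_diff_csqrt_power2_le[of A P]
  by (cases "P = 0") (simp_all add: norm_divide norm_power divide_le_eq_1)

lemma C1_mult_C2:
  "C1 a1 b1 a2 b2 s * C2 a1 b1 a2 b2 s =
     (A - A * csqrt (1 - 4 * P / A^2))^2 / (4 * P)"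
  if "A = s^2 + qq a1 b1 a2 b2 s" "P = p1 a1 b1 s * p2 a2 b2 s"
  using that by (simp add: C1_def C2_def mm_def power2_eq_square mult.assoc)

text \<open>No positivity is needed: if \<open>p\<^sub>1 p\<^sub>2 = 0\<close>, the product is \<open>0\<close> by the convention \<open>x / 0 = 0\<close>.\<close>

lemma norm_C1_mult_C2_le_1: "cmod (C1 a1 b1 a2 b2 s * C2 a1 b1 a2 b2 s) \<le> 1"
  by (simp only: C1_mult_C2[OF refl refl] norm_diff_csqrt_power2_div_le_1)

theorem lemma2:
  fixes a1 b1 a2 b2 :: real
  assumes "a1 > 0" "b1 > 0" "a2 > 0" "b2 > 0"
  shows "(SUP \<omega>\<in>{0::real..}.
            ereal (cmod (C1 a1 b1 a2 b2 (\<i> * of_real \<omega>) * C2 a1 b1 a2 b2 (\<i> * of_real \<omega>)))) \<le> 1"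
  by (rule SUP_least) (simp add: norm_C1_mult_C2_le_1)

end
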